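(* Let $G=(V,w,m)$ be a locally finite measured weighted graph (as defined in the context). Suppose that (i) $\operatorname{Deg}_{\max} := \sup_{x\in V}\sum_{y\in V} q(x,y) < \infty$, (ii) $q_{\min} := \inf_{x\sim y} q(x,y) > 0$, (iii) $\kappa(x,y)\ge 0$ for all $x\neq y\in V$. Then every bounded harmonic function $f:V\to\mathbb{R}$ (i.e. bounded $f$ with $\Delta f=0$) is constant.
   Context: A measured weighted graph $G=(V,w,m)$ consists of a countable set $V$, a symmetric function $w:V\times V\to[0,\infty)$ vanishing on the diagonal, and $m:V\to(0,\infty)$. Write $x\sim y$ iff $w(x,y)>0$. Local finiteness means $|\{y: w(x,y)>0\}|<\infty$ for every $x$. Set $q(x,y):=w(x,y)/m(x)$ and $\Delta f(x):=\sum_y q(x,y)(f(y)-f(x))$ for $f\in\mathbb{R}^V$. The combinatorial distance is $d(x,y):=\inf\{n: x=x_0\sim x_1\sim\cdots\sim x_n=y\}$. For $x\neq y$ put $\nabla_{xy}f:=\frac{f(x)-f(y)}{d(x,y)}$ and $\|\nabla f\|_\infty:=\sup_{x\sim y}\nabla_{xy}f$. The (Lin–Lu–Yau type, generalized) Ollivier curvature of $x\neq y$ is $$\kappa(x,y):=\inf\{\nabla_{xy}\Delta f:\ f\in\mathbb{R}^V,\ \nabla_{yx}f=1,\ \|\nabla f\|_\infty=1\}.$$ *)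

theory Defs
  imports "HOL-Analysis.Analysis"
begin

definition mw_graph :: "'a set \<Rightarrow> ('a \<Rightarrow> 'a \<Rightarrow> real) \<Rightarrow> ('a \<Rightarrow> real) \<Rightarrow> bool" where
  "mw_graph V w m \<longleftrightarrow> countable V
     \<and> (\<forall>x\<in>V. \<forall>y\<in>V. w x y \<ge> 0 \<and> w x y = w y x)
     \<and> (\<forall>x\<in>V. w x x = 0)
     \<and> (\<forall>x\<in>V. m x > 0)"

definition adj :: "'a set \<Rightarrow> ('a \<Rightarrow> 'a \<Rightarrow> real) \<Rightarrow> 'a \<Rightarrow> 'a \<Rightarrow> bool" where
  "adj V w x y \<longleftrightarrow> x \<in> V \<and> y \<in> V \<and> w x y > 0"

definition nbrs :: "'a set \<Rightarrow> ('a \<Rightarrow> 'a \<Rightarrow> real) \<Rightarrow> 'a \<Rightarrow> 'a set" where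
  "nbrs V w x = {y. adj V w x y}"

definition locally_finite :: "'a set \<Rightarrow> ('a \<Rightarrow> 'a \<Rightarrow> real) \<Rightarrow> bool" where
  "locally_finite V w \<longleftrightarrow> (\<forall>x\<in>V. finite (nbrs V w x))"

definition qq :: "('a \<Rightarrow> 'a \<Rightarrow> real) \<Rightarrow> ('a \<Rightarrow> real) \<Rightarrow> 'a \<Rightarrow> 'a \<Rightarrow> real" where
  "qq w m x y = w x y / m x"

text \<open>Laplacian; the sum only runs over neighbours (the other terms vanish).\<close>
definition lap :: "'a set \<Rightarrow> ('a \<Rightarrow> 'a \<Rightarrow> real) \<Rightarrow> ('a \<Rightarrow> real) \<Rightarrow> ('a \<Rightarrow> real) \<Rightarrow> 'a \<Rightarrow> real" where
  "lap V w m f x = (\<Sum>y\<in>nbrs V w x. qq w m x y * (f y - f x))"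

definition deg :: "'a set \<Rightarrow> ('a \<Rightarrow> 'a \<Rightarrow> real) \<Rightarrow> ('a \<Rightarrow> real) \<Rightarrow> 'a \<Rightarrow> real" where
  "deg V w m x = (\<Sum>y\<in>nbrs V w x. qq w m x y)"

definition walk :: "'a set \<Rightarrow> ('a \<Rightarrow> 'a \<Rightarrow> real) \<Rightarrow> nat \<Rightarrow> 'a \<Rightarrow> 'a \<Rightarrow> bool" where
  "walk V w n x y \<longleftrightarrow> (\<exists>p. p 0 = x \<and> p n = y \<and> x \<in> V \<and> (\<forall>i<n. adj V w (p i) (p (Suc i))))"

definition connected_graph :: "'a set \<Rightarrow> ('a \<Rightarrow> 'a \<Rightarrow> real) \<Rightarrow> bool" where
  "connected_graph V w \<longleftrightarrow> (\<forall>x\<in>V. \<forall>y\<in>V. \<exists>n. walk V w n x y)"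

text \<open>Combinatorial distance (meaningful for connected graphs).\<close>
definition gdist :: "'a set \<Rightarrow> ('a \<Rightarrow> 'a \<Rightarrow> real) \<Rightarrow> 'a \<Rightarrow> 'a \<Rightarrow> nat" where
  "gdist V w x y = Inf {n. walk V w n x y}"

definition grad :: "'a set \<Rightarrow> ('a \<Rightarrow> 'a \<Rightarrow> real) \<Rightarrow> ('a \<Rightarrow> real) \<Rightarrow> 'a \<Rightarrow> 'a \<Rightarrow> real" where
  "grad V w f x y = (f x - f y) / real (gdist V w x y)"

definition grad_norm :: "'a set \<Rightarrow> ('a \<Rightarrow> 'a \<Rightarrow> real) \<Rightarrow> ('a \<Rightarrow> real) \<Rightarrow> ereal" where
  "grad_norm V w f = (SUP (x, y) \<in> {(x, y). adj V w x y}. ereal (grad V w f x y))"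

definition curv :: "'a set \<Rightarrow> ('a \<Rightarrow> 'a \<Rightarrow> real) \<Rightarrow> ('a \<Rightarrow> real) \<Rightarrow> 'a \<Rightarrow> 'a \<Rightarrow> ereal" where
  "curv V w m x y = (INF f \<in> {f. grad V w f y x = 1 \<and> grad_norm V w f = 1}.
                       ereal (grad V w (lap V w m f) x y))"

end

theory Submission
  imports Defs
begin

text \<open>
  Normalise a bounded, non-constant harmonic function f to g = f / L, where L is its Lipschitz
  constant along edges; then g is 1-Lipschitz and has edges of slope arbitrarily close to 1.
  Harmonicity at the lower end x of such an edge x \<sim> y forces a neighbour z of x with
  g x - g z \<ge> c := q_min / (2 Deg_max), and z is not a neighbour of y. Nonnegative curvature
  of (x, y), where g y - g x = 1 - \<eta>, tested against the function
  min(g, g x - \<eta> + min(d(x, \<cdot>), 2)) with a dent of depth t at z, shows that some edge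
  leaving z again has slope close to 1, with a deficit at most a constant factor worse.
  Iterating n times yields a point where g is smaller by n c, contradicting boundedness.
\<close>

lemma adj_sym: "mw_graph V w m \<Longrightarrow> adj V w x y \<Longrightarrow> adj V w y x"
  unfolding mw_graph_def adj_def by auto

lemma adj_irrefl: "mw_graph V w m \<Longrightarrow> adj V w x y \<Longrightarrow> x \<noteq> y"
  unfolding mw_graph_def adj_def by auto

lemma qq_pos: "mw_graph V w m \<Longrightarrow> adj V w x y \<Longrightarrow> 0 < qq w m x y"
  unfolding mw_graph_def adj_def qq_def by auto

lemma qq_nonneg: "mw_graph V w m \<Longrightarrow> y \<in> nbrs V w x \<Longrightarrow> 0 \<le> qq w m x y"
  using qq_pos[of V w m x y] unfolding nbrs_def by auto

lemma deg_nonneg: "mw_graph V w m \<Longrightarrow> 0 \<le> deg V w m x"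
  unfolding deg_def by (intro sum_nonneg) (rule qq_nonneg)

lemma finite_nbrs: "locally_finite V w \<Longrightarrow> adj V w x y \<Longrightarrow> finite (nbrs V w x)"
  unfolding locally_finite_def adj_def by auto

lemma qq_le_deg:
  assumes "mw_graph V w m" "locally_finite V w" "adj V w x y"
  shows "qq w m x y \<le> deg V w m x"
  unfolding deg_def using assms finite_nbrs[OF assms(2,3)]
  by (intro member_le_sum) (auto simp: nbrs_def intro: qq_nonneg)

lemma gdist_adj:
  assumes "mw_graph V w m" "adj V w x y"
  shows "gdist V w x y = 1"
proof -
  have "walk V w 1 x y"
    using assms(2) unfolding walk_def adj_def
    by (intro exI[of _ "\<lambda>i. if i = 0 then x else y"]) auto
  moreover have "\<not> walk V w 0 x y"
    using adj_irrefl[OF assms] unfolding walk_def by auto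
  ultimately have "(LEAST n. walk V w n x y) = 1"
    by (intro Least_equality) (auto simp: Suc_le_eq intro: Nat.gr0I)
  then show ?thesis
    unfolding gdist_def Inf_nat_def by simp
qed

lemma connected_edge_const_imp_const:
  assumes conn: "connected_graph V w" and edge_const: "\<And>x y. adj V w x y \<Longrightarrow> f x = f y"
  shows "\<exists>c. \<forall>x\<in>V. f x = c"
proof (cases "V = {}")
  case False
  then obtain x0 where x0: "x0 \<in> V" by blast
  have "f x = f x0" if x: "x \<in> V" for x
  proof -
    obtain n where "walk V w n x0 x"
      using conn x0 x unfolding connected_graph_def by blast
    then obtain p where p: "p 0 = x0" "p n = x" "\<forall>i<n. adj V w (p i) (p (Suc i))"
      unfolding walk_def by blast
    have "f (p i) = f x0" if "i \<le> n" for i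
      using that
    proof (induction i)
      case 0
      then show ?case using p(1) by simp
    next
      case (Suc i)
      then have "i < n" by simp
      then have "f (p i) = f (p (Suc i))" using p(3) edge_const by simp
      with Suc.IH \<open>i < n\<close> show ?case by simp
    qed
    from this[of n] show ?thesis using p(2) by simp
  qed
  then show ?thesis by blast
qed simp

section \<open>The Laplacian\<close>

lemma lap_divide: "lap V w m (\<lambda>v. f v / L) x = lap V w m f x / L"
  unfolding lap_def by (simp add: sum_divide_distrib diff_divide_distrib[symmetric])

lemma lap_le_of_increments_le:
  assumes graph: "mw_graph V w m"
    and incr: "\<And>v. v \<in> nbrs V w x \<Longrightarrow> \<phi> v - \<phi> x \<le> g v - g x + \<eta>"
  shows "lap V w m \<phi> x \<le> lap V w m g x + \<eta> * deg V w m x"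
proof -
  have "lap V w m \<phi> x \<le> (\<Sum>v\<in>nbrs V w x. qq w m x v * (g v - g x + \<eta>))"
    unfolding lap_def using incr qq_nonneg[OF graph] by (intro sum_mono mult_left_mono) auto
  also have "\<dots> = lap V w m g x + \<eta> * deg V w m x"
    unfolding lap_def deg_def by (simp add: distrib_left sum.distrib sum_distrib_left mult.commute)
  finally show ?thesis .
qed

lemma lap_ge_of_increments_ge:
  assumes graph: "mw_graph V w m"
    and incr: "\<And>v. v \<in> nbrs V w x \<Longrightarrow> g v - g x - \<eta> \<le> \<phi> v - \<phi> x"
  shows "lap V w m g x - \<eta> * deg V w m x \<le> lap V w m \<phi> x"
proof -
  have "lap V w m g x - \<eta> * deg V w m x = (\<Sum>v\<in>nbrs V w x. qq w m x v * (g v - g x - \<eta>))"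
    unfolding lap_def deg_def
    by (simp add: right_diff_distrib sum_subtractf sum_distrib_left mult.commute)
  also have "\<dots> \<le> lap V w m \<phi> x"
    unfolding lap_def using incr qq_nonneg[OF graph] by (intro sum_mono mult_left_mono) auto
  finally show ?thesis .
qed

lemma lap_sub_point_mass:
  assumes graph: "mw_graph V w m" and lf: "locally_finite V w" and z: "z \<in> nbrs V w x"
  shows "lap V w m (\<lambda>v. \<phi> v - (if v = z then t else 0)) x = lap V w m \<phi> x - t * qq w m x z"
proof -
  have fin: "finite (nbrs V w x)" and "z \<noteq> x"
    using z finite_nbrs[OF lf] adj_irrefl[OF graph] unfolding nbrs_def by auto
  then have "lap V w m (\<lambda>v. \<phi> v - (if v = z then t else 0)) x
      = (\<Sum>v\<in>nbrs V w x. qq w m x v * (\<phi> v - \<phi> x) - (if v = z then t * qq w m x z else 0))"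
    unfolding lap_def by (intro sum.cong) (auto simp: algebra_simps)
  also have "\<dots> = lap V w m \<phi> x - t * qq w m x z"
    using fin z unfolding lap_def by (simp add: sum_subtractf)
  finally show ?thesis .
qed

lemma lap_sub_point_mass_away:
  "z \<notin> nbrs V w y \<Longrightarrow> z \<noteq> y \<Longrightarrow>
    lap V w m (\<lambda>v. \<phi> v - (if v = z then t else 0)) y = lap V w m \<phi> y"
  unfolding lap_def by (intro sum.cong) auto

lemma harmonic_exists_descending_nbr:
  assumes graph: "mw_graph V w m" and lf: "locally_finite V w"
    and harm: "lap V w m g x = 0" and y: "y \<in> nbrs V w x" and up: "g x < g y"
  shows "\<exists>z\<in>nbrs V w x - {y}. qq w m x y * (g y - g x) \<le> deg V w m x * (g x - g z)"
proof (rule ccontr)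
  define N where "N = nbrs V w x - {y}"
  define A where "A = qq w m x y * (g y - g x)"
  assume "\<not> ?thesis"
  then have small: "deg V w m x * (g x - g v) \<le> A" if "v \<in> N" for v
    using that unfolding N_def A_def by force
  have fin: "finite (nbrs V w x)"
    using y finite_nbrs[OF lf] unfolding nbrs_def by auto
  have qy: "0 < qq w m x y"
    using y qq_pos[OF graph] unfolding nbrs_def by auto
  then have A_pos: "0 < A"
    unfolding A_def using up by simp
  have "0 = lap V w m g x" using harm by simp
  also have "\<dots> = qq w m x y * (g y - g x) + (\<Sum>v\<in>N. qq w m x v * (g v - g x))"
    unfolding lap_def N_def using fin y by (simp add: sum.remove)
  finally have A_eq: "A = (\<Sum>v\<in>N. qq w m x v * (g x - g v))"
    unfolding A_def by (simp add: algebra_simps sum_negf[symmetric])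
  have deg_eq: "deg V w m x = qq w m x y + (\<Sum>v\<in>N. qq w m x v)"
    unfolding deg_def N_def using fin y by (simp add: sum.remove)
  have "deg V w m x * A = (\<Sum>v\<in>N. qq w m x v * (deg V w m x * (g x - g v)))"
    unfolding A_eq by (simp add: sum_distrib_left ac_simps)
  also have "\<dots> \<le> (\<Sum>v\<in>N. qq w m x v * A)"
    using small qq_nonneg[OF graph] unfolding N_def by (intro sum_mono mult_left_mono) auto
  also have "\<dots> = (deg V w m x - qq w m x y) * A"
    unfolding deg_eq by (simp add: sum_distrib_right)
  finally have "A * qq w m x y \<le> 0"
    by (simp add: algebra_simps)
  then show False
    using A_pos qy by (simp add: mult_le_0_iff)
qed

section \<open>Curvature and 1-Lipschitz test functions\<close>

definition edge_lipschitz :: "'a set \<Rightarrow> ('a \<Rightarrow> 'a \<Rightarrow> real) \<Rightarrow> ('a \<Rightarrow> real) \<Rightarrow> bool" where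
  "edge_lipschitz V w g \<longleftrightarrow> (\<forall>x y. adj V w x y \<longrightarrow> g x - g y \<le> 1)"

lemma edge_lipschitzD: "edge_lipschitz V w g \<Longrightarrow> adj V w x y \<Longrightarrow> g x - g y \<le> 1"
  unfolding edge_lipschitz_def by blast

lemma grad_norm_eq_1:
  assumes graph: "mw_graph V w m" and lip: "edge_lipschitz V w g"
    and xy: "adj V w x y" and tight: "g x - g y = 1"
  shows "grad_norm V w g = 1"
proof -
  have grad: "grad V w g a b = g a - g b" if "adj V w a b" for a b
    using gdist_adj[OF graph that] unfolding grad_def by simp
  show ?thesis
    unfolding grad_norm_def
  proof (rule antisym)
    show "(SUP (a, b)\<in>{(a, b). adj V w a b}. ereal (grad V w g a b)) \<le> 1"
      using lip by (intro SUP_least) (auto simp: grad edge_lipschitz_def)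
    show "1 \<le> (SUP (a, b)\<in>{(a, b). adj V w a b}. ereal (grad V w g a b))"
      using xy tight by (intro SUP_upper2[of "(x, y)"]) (auto simp: grad)
  qed
qed

lemma lap_le_if_curv_nonneg:
  assumes graph: "mw_graph V w m" and curv: "0 \<le> curv V w m x y" and xy: "adj V w x y"
    and lip: "edge_lipschitz V w \<phi>" and tight: "\<phi> y - \<phi> x = 1"
  shows "lap V w m \<phi> y \<le> lap V w m \<phi> x"
proof -
  have yx: "adj V w y x" using adj_sym[OF graph xy] .
  have "grad V w \<phi> y x = 1"
    using tight gdist_adj[OF graph yx] unfolding grad_def by simp
  moreover have "grad_norm V w \<phi> = 1"
    using grad_norm_eq_1[OF graph lip yx tight] .
  ultimately have "curv V w m x y \<le> ereal (grad V w (lap V w m \<phi>) x y)"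
    unfolding curv_def by (intro INF_lower) auto
  with curv have "0 \<le> ereal (grad V w (lap V w m \<phi>) x y)"
    by (rule order_trans)
  then show ?thesis
    using gdist_adj[OF graph xy] unfolding grad_def by simp
qed

lemma edge_lipschitz_dent:
  assumes graph: "mw_graph V w m" and lip: "edge_lipschitz V w \<psi>" and t: "0 \<le> t"
    and at_z: "\<And>u. u \<in> nbrs V w z \<Longrightarrow> \<psi> u - \<psi> z \<le> 1 - t"
  shows "edge_lipschitz V w (\<lambda>v. \<psi> v - (if v = z then t else 0))"
  unfolding edge_lipschitz_def
proof (intro allI impI)
  fix a b assume ab: "adj V w a b"
  have "\<psi> a - \<psi> z \<le> 1 - t" if "b = z"
    using at_z[of a] adj_sym[OF graph ab] that unfolding nbrs_def by simp
  then show "\<psi> a - (if a = z then t else 0) - (\<psi> b - (if b = z then t else 0)) \<le> 1"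
    using edge_lipschitzD[OF lip ab] adj_irrefl[OF graph ab] t by auto
qed

definition trunc_dist :: "'a set \<Rightarrow> ('a \<Rightarrow> 'a \<Rightarrow> real) \<Rightarrow> 'a \<Rightarrow> 'a \<Rightarrow> real" where
  "trunc_dist V w x v = (if v = x then 0 else if adj V w x v then 1 else 2)"

definition cone_cap :: "'a set \<Rightarrow> ('a \<Rightarrow> 'a \<Rightarrow> real) \<Rightarrow> ('a \<Rightarrow> real) \<Rightarrow> 'a \<Rightarrow> real \<Rightarrow> 'a \<Rightarrow> real"
  where "cone_cap V w g x \<eta> v = min (g v) (g x - \<eta> + trunc_dist V w x v)"

lemma edge_lipschitz_cone_cap:
  assumes graph: "mw_graph V w m" and lip: "edge_lipschitz V w g"
  shows "edge_lipschitz V w (cone_cap V w g x \<eta>)"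
  unfolding edge_lipschitz_def
proof (intro allI impI)
  fix a b assume ab: "adj V w a b"
  have "trunc_dist V w x a - trunc_dist V w x b \<le> 1"
    using ab adj_sym[OF graph ab] unfolding trunc_dist_def by auto
  then show "cone_cap V w g x \<eta> a - cone_cap V w g x \<eta> b \<le> 1"
    using edge_lipschitzD[OF lip ab] unfolding cone_cap_def by linarith
qed

lemma cone_cap_le: "cone_cap V w g x \<eta> v \<le> g v"
  unfolding cone_cap_def by simp

lemma cone_cap_center: "0 \<le> \<eta> \<Longrightarrow> cone_cap V w g x \<eta> x = g x - \<eta>"
  unfolding cone_cap_def trunc_dist_def by simp

lemma cone_cap_at_nbr:
  assumes graph: "mw_graph V w m" and xy: "adj V w x y" and deficit: "g y - g x = 1 - \<eta>"
  shows "cone_cap V w g x \<eta> y = g y"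
  using xy adj_irrefl[OF graph xy] deficit unfolding cone_cap_def trunc_dist_def by simp

lemma cone_cap_ge_nbr:
  assumes graph: "mw_graph V w m" and lip: "edge_lipschitz V w g"
    and yv: "adj V w y v" and y: "g y - g x \<le> 1" and \<eta>: "0 \<le> \<eta>"
  shows "g v - \<eta> \<le> cone_cap V w g x \<eta> v"
proof -
  have "g v - g x \<le> trunc_dist V w x v"
  proof -
    consider "v = x" | "v \<noteq> x" "adj V w x v" | "v \<noteq> x" "\<not> adj V w x v" by blast
    then show ?thesis
    proof cases
      case 2
      then show ?thesis
        using edge_lipschitzD[OF lip adj_sym[OF graph 2(2)]] unfolding trunc_dist_def by simp
    next
      case 3
      then show ?thesis
        using edge_lipschitzD[OF lip adj_sym[OF graph yv]] y unfolding trunc_dist_def by simp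
    qed (simp add: trunc_dist_def)
  qed
  then show ?thesis
    using \<eta> unfolding cone_cap_def by simp
qed

lemma lap_cone_cap_center_le:
  assumes graph: "mw_graph V w m" and \<eta>: "0 \<le> \<eta>"
  shows "lap V w m (cone_cap V w g x \<eta>) x \<le> lap V w m g x + \<eta> * deg V w m x"
proof (rule lap_le_of_increments_le[OF graph])
  fix v
  show "cone_cap V w g x \<eta> v - cone_cap V w g x \<eta> x \<le> g v - g x + \<eta>"
    using cone_cap_le[of V w g x \<eta> v] cone_cap_center[OF \<eta>, of V w g x] by linarith
qed

lemma lap_cone_cap_nbr_ge:
  assumes graph: "mw_graph V w m" and lip: "edge_lipschitz V w g"
    and xy: "adj V w x y" and deficit: "g y - g x = 1 - \<eta>" and \<eta>: "0 \<le> \<eta>"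
  shows "lap V w m g y - \<eta> * deg V w m y \<le> lap V w m (cone_cap V w g x \<eta>) y"
proof (rule lap_ge_of_increments_ge[OF graph])
  fix v assume "v \<in> nbrs V w y"
  then have "adj V w y v" unfolding nbrs_def by simp
  moreover have "g y - g x \<le> 1" using deficit \<eta> by simp
  ultimately have "g v - \<eta> \<le> cone_cap V w g x \<eta> v"
    using cone_cap_ge_nbr[OF graph lip _ _ \<eta>] by blast
  then show "g v - g y - \<eta> \<le> cone_cap V w g x \<eta> v - cone_cap V w g x \<eta> y"
    using cone_cap_at_nbr[OF graph xy deficit] by simp
qed

text \<open>
  If the dented test function were 1-Lipschitz, nonnegative curvature of (x, y) would give
  -\<eta> Deg(y) \<le> \<Delta>\<phi>(y) \<le> \<Delta>\<phi>(x) \<le> \<eta> Deg(x) - t q(x, z).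
\<close>
lemma curv_nonneg_propagates_steep_edge:
  assumes graph: "mw_graph V w m" and lf: "locally_finite V w"
    and curv: "0 \<le> curv V w m x y" and xy: "adj V w x y"
    and lip: "edge_lipschitz V w g"
    and harm_x: "lap V w m g x = 0" and harm_y: "lap V w m g y = 0"
    and deficit: "g y - g x = 1 - \<eta>"
    and z: "z \<in> nbrs V w x" "z \<noteq> y" "z \<notin> nbrs V w y"
    and depth: "\<eta> * (deg V w m x + deg V w m y) < t * qq w m x z"
  shows "\<exists>u\<in>nbrs V w z. 1 - t - \<eta> < g u - g z"
proof (rule ccontr)
  assume "\<not> ?thesis"
  then have flat: "g u - g z \<le> 1 - t - \<eta>" if "u \<in> nbrs V w z" for u
    using that by (simp add: not_less)
  define \<psi> where "\<psi> = cone_cap V w g x \<eta>"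
  define \<phi> where "\<phi> = (\<lambda>v. \<psi> v - (if v = z then t else 0))"
  have xz: "adj V w x z" using z(1) unfolding nbrs_def by simp
  have \<eta>: "0 \<le> \<eta>"
    using edge_lipschitzD[OF lip adj_sym[OF graph xy]] deficit by simp
  then have "0 \<le> \<eta> * (deg V w m x + deg V w m y)"
    using deg_nonneg[OF graph] by (simp add: add_nonneg_nonneg)
  with depth have "0 < t * qq w m x z" by linarith
  then have t: "0 < t"
    using qq_pos[OF graph xz] by (simp add: zero_less_mult_iff)
  have \<psi>z: "g z - \<eta> \<le> \<psi> z"
    unfolding \<psi>_def using cone_cap_ge_nbr[OF graph lip xz _ \<eta>] by simp
  have "lap V w m \<psi> y = lap V w m \<phi> y"
    unfolding \<phi>_def lap_sub_point_mass_away[OF z(3,2)] ..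
  also have "\<dots> \<le> lap V w m \<phi> x"
  proof (rule lap_le_if_curv_nonneg[OF graph curv xy])
    show "\<phi> y - \<phi> x = 1"
      using cone_cap_center[OF \<eta>, of V w g x] cone_cap_at_nbr[OF graph xy deficit] deficit z(2)
        adj_irrefl[OF graph xz]
      unfolding \<phi>_def \<psi>_def by simp
    show "edge_lipschitz V w \<phi>"
      unfolding \<phi>_def
    proof (rule edge_lipschitz_dent[OF graph _ less_imp_le[OF t]])
      show "edge_lipschitz V w \<psi>"
        unfolding \<psi>_def by (rule edge_lipschitz_cone_cap[OF graph lip])
      show "\<psi> u - \<psi> z \<le> 1 - t" if "u \<in> nbrs V w z" for u
        using flat[OF that] cone_cap_le[of V w g x \<eta> u] \<psi>z unfolding \<psi>_def by linarith
    qed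
  qed
  also have "\<dots> = lap V w m \<psi> x - t * qq w m x z"
    unfolding \<phi>_def lap_sub_point_mass[OF graph lf z(1)] ..
  finally have "lap V w m \<psi> y \<le> lap V w m \<psi> x - t * qq w m x z" .
  moreover have "lap V w m \<psi> x \<le> \<eta> * deg V w m x"
    using lap_cone_cap_center_le[OF graph \<eta>, of g x] harm_x unfolding \<psi>_def by simp
  moreover have "- \<eta> * deg V w m y \<le> lap V w m \<psi> y"
    using lap_cone_cap_nbr_ge[OF graph lip xy deficit \<eta>] harm_y unfolding \<psi>_def by simp
  ultimately show False
    using depth by (simp add: algebra_simps)
qed

section \<open>Descent along steep edges\<close>

locale nonneg_curv_harmonic =
  fixes V :: "'a set" and w :: "'a \<Rightarrow> 'a \<Rightarrow> real" and m :: "'a \<Rightarrow> real"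
    and g :: "'a \<Rightarrow> real" and D Q :: real
  assumes graph: "mw_graph V w m"
    and lf: "locally_finite V w"
    and curv_nonneg: "\<And>x y. x \<in> V \<Longrightarrow> y \<in> V \<Longrightarrow> x \<noteq> y \<Longrightarrow> 0 \<le> curv V w m x y"
    and deg_le: "\<And>x. x \<in> V \<Longrightarrow> deg V w m x \<le> D"
    and qq_ge: "\<And>x y. adj V w x y \<Longrightarrow> Q \<le> qq w m x y"
    and Q_pos: "0 < Q"
    and lip: "edge_lipschitz V w g"
    and harmonic: "\<And>x. x \<in> V \<Longrightarrow> lap V w m g x = 0"
begin

lemma Q_le_D:
  assumes "adj V w x y"
  shows "Q \<le> D"
proof -
  have "Q \<le> qq w m x y" using qq_ge[OF assms] .
  also have "\<dots> \<le> deg V w m x" using qq_le_deg[OF graph lf assms] .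
  also have "\<dots> \<le> D" using deg_le assms unfolding adj_def by simp
  finally show ?thesis .
qed

lemma steep_edge_far_descending_nbr:
  assumes xy: "adj V w x y" and e: "e < Q / (2 * D)" and steep: "1 - e < g y - g x"
  shows "\<exists>z\<in>nbrs V w x. z \<noteq> y \<and> z \<notin> nbrs V w y \<and> Q / (2 * D) \<le> g x - g z"
proof -
  have xV: "x \<in> V" and yN: "y \<in> nbrs V w x"
    using xy unfolding adj_def nbrs_def by auto
  have QD: "Q \<le> D" using Q_le_D[OF xy] .
  with Q_pos have D: "0 < D" by linarith
  have "Q / (2 * D) \<le> 1 / 2"
    using QD D by (simp add: field_simps)
  with e have e_half: "e < 1 / 2" by linarith
  obtain z where z: "z \<in> nbrs V w x" "z \<noteq> y"
    and z_desc: "qq w m x y * (g y - g x) \<le> deg V w m x * (g x - g z)"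
    using harmonic_exists_descending_nbr[OF graph lf harmonic[OF xV] yN] steep e_half by auto
  have "Q * (1 / 2) \<le> Q * (g y - g x)"
    using Q_pos steep e_half by (intro mult_left_mono) auto
  also have "\<dots> \<le> qq w m x y * (g y - g x)"
    using qq_ge[OF xy] steep e_half by (intro mult_right_mono) auto
  also note z_desc
  finally have half_Q: "Q / 2 \<le> deg V w m x * (g x - g z)" by simp
  have "0 < g x - g z"
  proof (rule ccontr)
    assume "\<not> 0 < g x - g z"
    then have "deg V w m x * (g x - g z) \<le> 0"
      using deg_nonneg[OF graph] by (simp add: mult_nonneg_nonpos)
    then show False using half_Q Q_pos by linarith
  qed
  then have "deg V w m x * (g x - g z) \<le> D * (g x - g z)"
    using deg_le[OF xV] by (intro mult_right_mono) auto
  with half_Q have z_low: "Q / (2 * D) \<le> g x - g z"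
    using D by (simp add: field_simps)
  have "z \<notin> nbrs V w y"
  proof
    assume "z \<in> nbrs V w y"
    then have "g y - g z \<le> 1"
      using edge_lipschitzD[OF lip] unfolding nbrs_def by blast
    then show False using z_low e steep by linarith
  qed
  with z z_low show ?thesis by blast
qed

lemma steep_edge_descends:
  assumes xy: "adj V w x y" and e: "0 < e" "e < Q / (2 * D)" and steep: "1 - e < g y - g x"
  shows "\<exists>x' y'. adj V w x' y' \<and> 1 - (1 + 2 * D / Q) * e < g y' - g x'
                \<and> g x' \<le> g x - Q / (2 * D)"
proof -
  have xV: "x \<in> V" and yV: "y \<in> V"
    using xy unfolding adj_def by auto
  obtain z where z: "z \<in> nbrs V w x" "z \<noteq> y" "z \<notin> nbrs V w y"
    and z_low: "Q / (2 * D) \<le> g x - g z"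
    using steep_edge_far_descending_nbr[OF xy e(2) steep] by blast
  have xz: "adj V w x z" using z(1) unfolding nbrs_def by simp
  have D: "0 < D" using Q_le_D[OF xy] Q_pos by linarith
  define \<eta> where "\<eta> = 1 - (g y - g x)"
  define t where "t = 2 * D * e / Q"
  have deficit: "g y - g x = 1 - \<eta>"
    unfolding \<eta>_def by simp
  have \<eta>: "0 \<le> \<eta>" "\<eta> < e"
    using edge_lipschitzD[OF lip adj_sym[OF graph xy]] steep unfolding \<eta>_def by auto
  have "\<eta> * (deg V w m x + deg V w m y) \<le> \<eta> * (2 * D)"
    using deg_le[OF xV] deg_le[OF yV] \<eta>(1) by (intro mult_left_mono) auto
  also have "\<dots> < e * (2 * D)"
    using \<eta>(2) D by simp
  also have "\<dots> = t * Q"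
    unfolding t_def using Q_pos by simp
  also have "\<dots> \<le> t * qq w m x z"
    using qq_ge[OF xz] e D Q_pos unfolding t_def by (intro mult_left_mono) auto
  finally have depth: "\<eta> * (deg V w m x + deg V w m y) < t * qq w m x z" .
  obtain u where u: "u \<in> nbrs V w z" "1 - t - \<eta> < g u - g z"
    using curv_nonneg_propagates_steep_edge[OF graph lf curv_nonneg[OF xV yV adj_irrefl[OF graph xy]]
        xy lip harmonic[OF xV] harmonic[OF yV] deficit z depth] by blast
  have "(1 + 2 * D / Q) * e = e + t"
    unfolding t_def using Q_pos by (simp add: field_simps)
  then show ?thesis
    using u \<eta>(2) z_low unfolding nbrs_def by (intro exI[of _ z] exI[of _ u]) auto
qed

lemma steep_edge_descends_iter:
  assumes "adj V w x y" "0 < e" "e * (1 + 2 * D / Q) ^ n < Q / (2 * D)" "1 - e < g y - g x"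
  shows "\<exists>x'\<in>V. g x' \<le> g x - real n * (Q / (2 * D))"
  using assms
proof (induction n arbitrary: x y e)
  case 0
  then show ?case unfolding adj_def by auto
next
  case (Suc n)
  define K where "K = 1 + 2 * D / Q"
  have "1 \<le> K"
    using Q_le_D[OF Suc.prems(1)] Q_pos unfolding K_def by simp
  then have "e * 1 \<le> e * K ^ Suc n"
    using Suc.prems(2) by (intro mult_left_mono one_le_power) auto
  then obtain x1 y1 where
    step: "adj V w x1 y1" "1 - K * e < g y1 - g x1" "g x1 \<le> g x - Q / (2 * D)"
    using steep_edge_descends[OF Suc.prems(1,2) _ Suc.prems(4)] Suc.prems(3)
    unfolding K_def by fastforce
  have "(K * e) * K ^ n < Q / (2 * D)"
    using Suc.prems(3) unfolding K_def by (simp add: ac_simps)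
  then obtain x' where x': "x' \<in> V" "g x' \<le> g x1 - real n * (Q / (2 * D))"
    using Suc.IH[OF step(1) _ _ step(2)] Suc.prems(2) \<open>1 \<le> K\<close> unfolding K_def by fastforce
  have "real (Suc n) * (Q / (2 * D)) = Q / (2 * D) + real n * (Q / (2 * D))"
    by (simp only: of_nat_Suc distrib_right mult_1_left)
  then have "g x' \<le> g x - real (Suc n) * (Q / (2 * D))"
    using x'(2) step(3) by linarith
  with x'(1) show ?case by blast
qed

lemma steep_imp_unbounded:
  assumes steep: "\<And>r. 0 < r \<Longrightarrow> \<exists>x y. adj V w x y \<and> 1 - r < g y - g x"
  shows "\<not> (\<exists>B. \<forall>x\<in>V. \<bar>g x\<bar> \<le> B)"
proof
  assume "\<exists>B. \<forall>x\<in>V. \<bar>g x\<bar> \<le> B"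
  then obtain B where B: "\<And>x. x \<in> V \<Longrightarrow> \<bar>g x\<bar> \<le> B" by blast
  define c where "c = Q / (2 * D)"
  define K where "K = 1 + 2 * D / Q"
  obtain x0 y0 where "adj V w x0 y0" using steep[of 1] by auto
  with Q_pos have QD: "0 < Q" "Q \<le> D" using Q_le_D by auto
  then have c: "0 < c" and K: "0 < K"
    unfolding c_def K_def by (auto intro: add_pos_nonneg)
  obtain n where n: "2 * B < real n * c"
    using c ex_less_of_nat_mult by blast
  define e where "e = c / (2 * K ^ n)"
  have e: "0 < e" "e * K ^ n < c"
    unfolding e_def using c K by auto
  obtain x y where xy: "adj V w x y" "1 - e < g y - g x"
    using steep[OF e(1)] by blast
  then obtain x' where "x' \<in> V" "g x' \<le> g x - real n * c"
    using steep_edge_descends_iter[OF xy(1) e(1) _ xy(2)] e(2) unfolding c_def K_def by blast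
  moreover have "x \<in> V" using xy(1) unfolding adj_def by simp
  ultimately show False
    using B[of x] B[of x'] n by linarith
qed

end

section \<open>Normalisation and the Liouville theorem\<close>

lemma SUP_less_PInf_imp_bound:
  fixes h :: "'b \<Rightarrow> ereal"
  assumes "(SUP p\<in>A. h p) < \<infinity>"
  shows "\<exists>D. \<forall>p\<in>A. h p \<le> ereal D"
proof -
  obtain D where D: "(SUP p\<in>A. h p) < ereal D"
    using ereal_dense2[OF assms] by blast
  have "h p \<le> ereal D" if "p \<in> A" for p
    using SUP_upper[OF that, of h] D by simp
  then show ?thesis by blast
qed

lemma INF_pos_imp_bound:
  fixes h :: "'b \<Rightarrow> ereal"
  assumes "0 < (INF p\<in>A. h p)"
  shows "\<exists>Q>0. \<forall>p\<in>A. ereal Q \<le> h p"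
proof -
  obtain Q where Q: "0 < ereal Q" "ereal Q < (INF p\<in>A. h p)"
    using ereal_dense2[OF assms] by blast
  have "ereal Q \<le> h p" if "p \<in> A" for p
    using INF_lower[OF that, of h] Q(2) by simp
  with Q(1) show ?thesis by auto
qed

lemma exists_steep_normalization:
  assumes graph: "mw_graph V w m" and bounded: "\<forall>x\<in>V. \<bar>f x\<bar> \<le> B"
    and ab: "adj V w a b" "f a \<noteq> f b"
  shows "\<exists>L>0. edge_lipschitz V w (\<lambda>v. f v / L)
               \<and> (\<forall>r>0. \<exists>x y. adj V w x y \<and> 1 - r < f y / L - f x / L)"
proof -
  define S where "S = {f y - f x | x y. adj V w x y}"
  have "s \<le> 2 * B" if s: "s \<in> S" for s
  proof -
    obtain x y where "s = f y - f x" "x \<in> V" "y \<in> V"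
      using s unfolding S_def adj_def by blast
    then show ?thesis using bounded by (smt (verit))
  qed
  then have bdd: "bdd_above S" by (rule bdd_aboveI)
  define L where "L = Sup S"
  have upper: "f y - f x \<le> L" if "adj V w x y" for x y
    unfolding L_def using bdd that by (intro cSup_upper) (auto simp: S_def)
  have L: "0 < L"
    using upper[OF ab(1)] upper[OF adj_sym[OF graph ab(1)]] ab(2) by linarith
  have "edge_lipschitz V w (\<lambda>v. f v / L)"
    unfolding edge_lipschitz_def
  proof (intro allI impI)
    fix x y assume "adj V w x y"
    then have "f x - f y \<le> L" using upper adj_sym[OF graph] by blast
    then show "f x / L - f y / L \<le> 1"
      using L by (simp add: diff_divide_distrib[symmetric])
  qed
  moreover have "\<exists>x y. adj V w x y \<and> 1 - r < f y / L - f x / L" if r: "0 < r" for r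
  proof -
    have "L - r * L < Sup S" using r L unfolding L_def by simp
    then obtain x y where "adj V w x y" "L - r * L < f y - f x"
      using less_cSup_iff[OF _ bdd] ab(1) unfolding S_def by blast
    moreover have "(L - r * L) / L = 1 - r" using L by (simp add: field_simps)
    ultimately show ?thesis
      using L divide_strict_right_mono[of "L - r * L" "f y - f x" L]
      by (auto simp: diff_divide_distrib[symmetric])
  qed
  ultimately show ?thesis using L by blast
qed

theorem theorem2p1:
  fixes V :: "'a set" and w :: "'a \<Rightarrow> 'a \<Rightarrow> real" and m :: "'a \<Rightarrow> real" and f :: "'a \<Rightarrow> real"
  assumes graph: "mw_graph V w m"
    and conn: "connected_graph V w"
    and lf: "locally_finite V w"
    and degmax: "(SUP x \<in> V. ereal (deg V w m x)) < \<infinity>"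
    and qmin: "(INF (x, y) \<in> {(x, y). adj V w x y}. ereal (qq w m x y)) > 0"
    and curv_nonneg: "\<forall>x\<in>V. \<forall>y\<in>V. x \<noteq> y \<longrightarrow> curv V w m x y \<ge> 0"
    and bounded: "\<exists>B. \<forall>x\<in>V. \<bar>f x\<bar> \<le> B"
    and harmonic: "\<forall>x\<in>V. lap V w m f x = 0"
  shows "\<exists>c. \<forall>x\<in>V. f x = c"
proof (cases "\<forall>x y. adj V w x y \<longrightarrow> f x = f y")
  case True
  then show ?thesis using connected_edge_const_imp_const[OF conn] by blast
next
  case False
  then obtain a b where ab: "adj V w a b" "f a \<noteq> f b" by blast
  obtain B where B: "\<forall>x\<in>V. \<bar>f x\<bar> \<le> B" using bounded by blast
  obtain L where L: "0 < L" and lip: "edge_lipschitz V w (\<lambda>v. f v / L)"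
    and steep: "\<forall>r>0. \<exists>x y. adj V w x y \<and> 1 - r < f y / L - f x / L"
    using exists_steep_normalization[OF graph B ab] by blast
  obtain D where D: "\<forall>x\<in>V. ereal (deg V w m x) \<le> ereal D"
    using SUP_less_PInf_imp_bound[OF degmax] by blast
  obtain Q where Q: "0 < Q" "\<forall>(x, y)\<in>{(x, y). adj V w x y}. ereal Q \<le> ereal (qq w m x y)"
    using INF_pos_imp_bound[OF qmin] by (auto simp: case_prod_beta)
  interpret nonneg_curv_harmonic V w m "\<lambda>v. f v / L" D Q
    using graph lf curv_nonneg D Q lip harmonic by unfold_locales (auto simp: lap_divide)
  have "\<forall>x\<in>V. \<bar>f x / L\<bar> \<le> B / L"
    using B L by (simp add: abs_div divide_right_mono)
  then show ?thesis
    using steep_imp_unbounded steep by blast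
qed

end
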